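(* Let $k>1$ and let $\mathrm{tHyperCom}_k$ be the twisted associative algebra generated, for each $d\geqslant0$, by an $S_{1+d(k-1)}$-invariant element $\mathsf m^{2d}$ of arity $1+d(k-1)$ and homological degree $2d$, subject to: for each $d\geqslant0$, $n=2+d(k-1)$, and $i_1\neq i_2\in\underline n$, \[ \sum_{d_1+d_2=d}\ \sum_{\substack{\underline n=I_1\sqcup I_2,\ i_1\in I_1,\ i_2\in I_2\\ |I_1|=1+d_1(k-1),\ |I_2|=1+d_2(k-1)}}\mathsf m^{2d_1}_{I_1}\mathsf m^{2d_2}_{I_2} =\sum_{d_1+d_2=d}\ \sum_{\substack{\underline n=I_1\sqcup I_2,\ i_1\in I_1,\ i_2\in I_2\\ |I_1|=1+d_1(k-1),\ |I_2|=1+d_2(k-1)}}\mathsf m^{2d_2}_{I_2}\mathsf m^{2d_1}_{I_1}. \] Then for every $n\geqslant1$, $\dim\mathrm{tHyperCom}_k^!(\underline n)=\sum_{p=0}^{n}\binom{n-1}{p(k-1)}$.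
   Context: Work over a field $\Bbbk$ of characteristic zero, homologically graded vector spaces; $\underline n=\{1,\dots,n\}$. A twisted associative algebra is a monoid in species for the Cauchy product; for an $S_t$-invariant element $\mathsf x$ of arity $t$, $\mathsf x_I$ is its relabeling to the $t$-element set $I$; relations are imposed with all relabelings. For a quadratic twisted associative algebra $\mathcal A$, the Koszul dual coalgebra $\mathcal A^{¡}$ is the diagonal part (syzygy degree equal to weight) of the homology of the bar construction, and the Koszul dual algebra is $\mathcal A^!(n)=\mathsf S^{-1}(n)\otimes(\mathcal A^{¡}(n))^*$, with $\mathsf S^{-1}(n)=(\Bbbk s)^{\otimes n}$ one-dimensional; dimensions are total dimensions over all degrees. *)

theory Defs
  imports Complex_Main "HOL-Library.Function_Algebras"
begin

(* Vectors of a species component are finitely supported functions on a basis;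
   a basis element of weight w of the free twisted associative algebra on the
   generators m^{2d} in arity S is an ordered list [I_1,...,I_w] of pairwise
   disjoint blocks covering S, each block I_j labelling m^{2d_j}_{I_j} with
   |I_j| = 1 + d_j (k-1). *)

definition scl :: "'a::field \<Rightarrow> (nat set list \<Rightarrow> 'a) \<Rightarrow> (nat set list \<Rightarrow> 'a)" where
  "scl c f = (\<lambda>L. c * f L)"

lemma vector_space_scl: "vector_space (scl :: 'a::field \<Rightarrow> _)"
  unfolding vector_space_def scl_def by (auto simp: fun_eq_iff algebra_simps)

definition gen_arity :: "nat \<Rightarrow> nat set \<Rightarrow> bool" where
  "gen_arity k I \<longleftrightarrow> (\<exists>d. card I = 1 + d * (k - 1))"

definition ordpart :: "nat \<Rightarrow> nat set \<Rightarrow> nat set list \<Rightarrow> bool" where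
  "ordpart k S Is \<longleftrightarrow> (\<forall>I\<in>set Is. gen_arity k I)
     \<and> (\<forall>i<length Is. \<forall>j<length Is. i \<noteq> j \<longrightarrow> Is ! i \<inter> Is ! j = {})
     \<and> \<Union>(set Is) = S"

(* relabelling to T (|T| = 2 + d(k-1)) of the relation for the pair i1 \<noteq> i2:
   sum over I1 \<sqcup> I2 = T, i1\<in>I1, i2\<in>I2 of m_{I1} m_{I2} - m_{I2} m_{I1} *)
definition rel :: "nat \<Rightarrow> nat set \<Rightarrow> nat \<Rightarrow> nat \<Rightarrow> nat set list \<Rightarrow> 'a::field" where
  "rel k T i1 i2 L = (if length L = 2 \<and> ordpart k T L then
       (if i1 \<in> L ! 0 \<and> i2 \<in> L ! 1 then 1 else 0)
     - (if i2 \<in> L ! 0 \<and> i1 \<in> L ! 1 then 1 else 0) else 0)"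

definition rels :: "nat \<Rightarrow> nat set \<Rightarrow> (nat set list \<Rightarrow> 'a::field) set" where
  "rels k T = {rel k T i1 i2 | i1 i2. i1 \<in> T \<and> i2 \<in> T \<and> i1 \<noteq> i2
                 \<and> (\<exists>d. card T = 2 + d * (k - 1))}"

(* Koszul dual coalgebra tHyperCom_k^{\<exclamdown>}(S): diagonal part of the bar homology,
   i.e. the elements of the (weight-graded) cofree part spanned by monomials in
   the generators all of whose adjacent two-letter slices lie in the relations *)
definition koszul_coalg :: "nat \<Rightarrow> nat set \<Rightarrow> (nat set list \<Rightarrow> 'a::field) set" where
  "koszul_coalg k S = {x. (\<forall>Is. \<not> ordpart k S Is \<longrightarrow> x Is = 0)
      \<and> (\<forall>pre post. (\<lambda>L. if length L = 2 then x (pre @ L @ post) else 0)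
             \<in> module.span scl (rels k (S - \<Union>(set pre) - \<Union>(set post))))}"

(* dim tHyperCom_k^!(S) = dim (S^{-1}(S) \<otimes> (tHyperCom_k^{\<exclamdown>}(S))^* ) = dim tHyperCom_k^{\<exclamdown>}(S) *)
definition dual_dim :: "'a::field itself \<Rightarrow> nat \<Rightarrow> nat set \<Rightarrow> nat" where
  "dual_dim _ k S = vector_space.dim (scl :: 'a \<Rightarrow> _) (koszul_coalg k S)"

end

theory Submission
  imports Defs
begin

(*
  An element y of the Koszul dual coalgebra is a coefficient function on monomials
  m_{I_1} ... m_{I_w} all of whose two-block slices lie in the span of the relations.
  Every f in that span satisfies f[A,B] = - f[B,A] and f[A,B] = sum_{l in B} f[T-{l},{l}],
  so y obeys the same two rules on any two adjacent blocks.  With these moves y is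
  determined by its values on the normal monomials m_{[n]-L} m_{l_1} ... m_{l_r}, where
  L = {l_1 < ... < l_r} does not contain 1 and |[n]-L| = 1 + p(k-1).  Conversely, for
  J = {1} \<union> L the cochain recording the sign of the order in which the blocks meet J
  (and 0 unless J meets every block exactly once) lies in the coalgebra, because each of its
  slices is a multiple of the single relation for the two points of J in the slice; it is 1 on
  the normal monomial of L and 0 on all others.  Hence the dimension is the number of such L,
  and sorting them by |L| = n - 1 - p(k-1) gives the binomial sum.
*)

interpretation V: vector_space "scl :: 'a::field \<Rightarrow> (nat set list \<Rightarrow> 'a) \<Rightarrow> _"
  by (rule vector_space_scl)

lemma scl_apply [simp]: "scl c f L = c * f L"
  by (simp add: scl_def)

lemma sum_fun_apply: "(\<Sum>a\<in>A. f a) x = (\<Sum>a\<in>A. f a x)"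
  by (induction A rule: infinite_finite_induct) auto

abbreviation singletons :: "nat list \<Rightarrow> nat set list" where
  "singletons ls \<equiv> map (\<lambda>l. {l}) ls"

lemma ordpart_iff_sorted_wrt:
  "ordpart k S Bs \<longleftrightarrow> (\<forall>B\<in>set Bs. gen_arity k B) \<and> sorted_wrt disjnt Bs \<and> \<Union>(set Bs) = S"
proof -
  have "(\<forall>i<length Bs. \<forall>j<length Bs. i \<noteq> j \<longrightarrow> Bs ! i \<inter> Bs ! j = {}) \<longleftrightarrow>
      (\<forall>i j. i < j \<longrightarrow> j < length Bs \<longrightarrow> disjnt (Bs ! i) (Bs ! j))" (is "?L \<longleftrightarrow> ?R")
  proof
    show "?L \<Longrightarrow> ?R"
      by (simp add: disjnt_def)
    show "?L" if ?R
    proof (intro allI impI)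
      fix i j
      assume "i < length Bs" "j < length Bs" "i \<noteq> j"
      then show "Bs ! i \<inter> Bs ! j = {}"
        using that[rule_format, of i j] that[rule_format, of j i] by (auto simp: disjnt_def linorder_neq_iff)
    qed
  qed
  then show ?thesis
    unfolding ordpart_def sorted_wrt_iff_nth_less by (simp only:)
qed

lemma sorted_wrt_disjnt_append:
  "sorted_wrt disjnt (xs @ ys) \<longleftrightarrow>
     sorted_wrt disjnt xs \<and> sorted_wrt disjnt ys \<and> disjnt (\<Union>(set xs)) (\<Union>(set ys))"
  by (auto simp: sorted_wrt_append)

lemma ordpart_middle:
  assumes "ordpart k S (pre @ Bs @ post)"
  shows "ordpart k S (pre @ Cs @ post) \<longleftrightarrow> ordpart k (S - \<Union>(set pre) - \<Union>(set post)) Cs"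
  using assms unfolding ordpart_iff_sorted_wrt sorted_wrt_disjnt_append disjnt_def by auto

lemma ordpart_swap: "ordpart k S (pre @ [A, B] @ post) \<longleftrightarrow> ordpart k S (pre @ [B, A] @ post)"
  unfolding ordpart_iff_sorted_wrt sorted_wrt_disjnt_append by (auto simp: disjnt_def)

lemma sorted_wrt_disjnt_singletons: "sorted_wrt disjnt (singletons ls) \<longleftrightarrow> distinct ls"
  by (induction ls) auto

lemma gen_arity_singleton: "gen_arity k {l}"
  unfolding gen_arity_def by (rule exI[of _ 0]) simp

lemma gen_arity_imp_finite: "gen_arity k A \<Longrightarrow> finite A"
  unfolding gen_arity_def by (metis add_is_0 card.infinite zero_neq_one)

lemma ordpart_singletons: "ordpart k T (singletons ls) \<longleftrightarrow> distinct ls \<and> set ls = T"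
  unfolding ordpart_iff_sorted_wrt sorted_wrt_disjnt_singletons by (auto simp: gen_arity_singleton)

lemma card_ordpart_two_blocks:
  assumes "ordpart k T [A, B]"
  shows "\<exists>d. card T = 2 + d * (k - 1)"
proof -
  obtain d1 d2 where "card A = 1 + d1 * (k - 1)" "card B = 1 + d2 * (k - 1)"
    using assms unfolding ordpart_def gen_arity_def by auto
  moreover have "finite A" "finite B" "A \<inter> B = {}" "T = A \<union> B"
    using assms gen_arity_imp_finite unfolding ordpart_iff_sorted_wrt by (auto simp: disjnt_def)
  ultimately have "card T = 2 + (d1 + d2) * (k - 1)"
    by (simp add: card_Un_disjoint add_mult_distrib)
  then show ?thesis ..
qed

lemma ordpart_complement_singleton:
  assumes "card T = 2 + d * (k - 1)" and "l \<in> T"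
  shows "ordpart k T [T - {l}, {l}]"
proof -
  have "card (T - {l}) = 1 + d * (k - 1)"
    using assms by (simp add: card_gt_0_iff)
  then show ?thesis
    using assms(2) unfolding ordpart_iff_sorted_wrt gen_arity_def by auto
qed

lemma rel_swap:
  assumes "ordpart k T [A, B]"
  shows "(rel k T p q [A, B] :: 'a::field) = - rel k T p q [B, A]"
  using assms ordpart_swap[of k T "[]" A B "[]"] by (auto simp: rel_def)

lemma rel_split:
  assumes "p \<in> T" "q \<in> T" "p \<noteq> q" and T: "card T = 2 + d * (k - 1)" and AB: "ordpart k T [A, B]"
  shows "(rel k T p q [A, B] :: 'a::field) = (\<Sum>l\<in>B. rel k T p q [T - {l}, {l}])"
proof -
  have B: "finite B" "A \<inter> B = {}" "T = A \<union> B"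
    using AB gen_arity_imp_finite unfolding ordpart_iff_sorted_wrt by (auto simp: disjnt_def)
  have "(\<Sum>l\<in>B. (rel k T p q [T - {l}, {l}] :: 'a))
      = (\<Sum>l\<in>B. (if l = q then 1 else 0) - (if l = p then 1 else 0))"
  proof (rule sum.cong)
    fix l
    assume "l \<in> B"
    then have "ordpart k T [T - {l}, {l}]"
      using T B(3) ordpart_complement_singleton by blast
    then show "rel k T p q [T - {l}, {l}] = (if l = q then 1 else 0) - (if l = p then 1 else 0)"
      using assms(1-3) by (auto simp: rel_def)
  qed simp
  also have "\<dots> = (if q \<in> B then 1 else 0) - (if p \<in> B then 1 else 0)"
    using B(1) by (simp add: sum_subtractf)
  finally show ?thesis
    using assms(1-3) AB B(2,3) by (auto simp: rel_def)
qed

lemma span_rels_swap_split: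
  assumes "f \<in> V.span (rels k T)" and "ordpart k T [A, B]"
  shows "f [A, B] = - f [B, A]" and "f [A, B] = (\<Sum>l\<in>B. f [T - {l}, {l}])"
proof -
  let ?W = "{f :: nat set list \<Rightarrow> 'a. f [A, B] = - f [B, A] \<and> f [A, B] = (\<Sum>l\<in>B. f [T - {l}, {l}])}"
  have "rels k T \<subseteq> ?W"
    using assms(2) rel_swap rel_split unfolding rels_def by blast
  moreover have "V.subspace ?W"
  proof (rule V.subspaceI)
    fix f g :: "nat set list \<Rightarrow> 'a"
    assume "f \<in> ?W" "g \<in> ?W"
    then show "f + g \<in> ?W"
      unfolding mem_Collect_eq plus_fun_apply sum.distrib by (metis minus_add_distrib)
  next
    fix c :: 'a and f :: "nat set list \<Rightarrow> 'a"
    assume "f \<in> ?W"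
    then show "scl c f \<in> ?W"
      unfolding mem_Collect_eq scl_apply sum_distrib_left[symmetric] by (metis mult_minus_right)
  qed simp
  ultimately have "V.span (rels k T) \<subseteq> ?W"
    by (rule V.span_minimal)
  with assms(1) show "f [A, B] = - f [B, A]" and "f [A, B] = (\<Sum>l\<in>B. f [T - {l}, {l}])"
    by auto
qed

definition slice :: "(nat set list \<Rightarrow> 'a) \<Rightarrow> nat set list \<Rightarrow> nat set list \<Rightarrow> nat set list \<Rightarrow> 'a::zero" where
  "slice y pre post = (\<lambda>L. if length L = 2 then y (pre @ L @ post) else 0)"

lemma slice_eqI:
  assumes "\<And>A B. y (pre @ [A, B] @ post) = f [A, B]" and "\<And>L. length L \<noteq> 2 \<Longrightarrow> f L = 0"
  shows "slice y pre post = f"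
proof
  fix L :: "nat set list"
  show "slice y pre post L = f L"
  proof (cases "length L = 2")
    case True
    then obtain A B where "L = [A, B]"
      by (auto simp: numeral_2_eq_2 length_Suc_conv)
    then show ?thesis
      using assms(1) by (simp add: slice_def)
  qed (simp add: slice_def assms(2))
qed

lemma koszul_coalg_iff:
  "y \<in> koszul_coalg k S \<longleftrightarrow> (\<forall>Bs. \<not> ordpart k S Bs \<longrightarrow> y Bs = 0)
     \<and> (\<forall>pre post. slice y pre post \<in> V.span (rels k (S - \<Union>(set pre) - \<Union>(set post))))"
  unfolding koszul_coalg_def slice_def by simp

lemma koszul_coalg_eq_0: "y \<in> koszul_coalg k S \<Longrightarrow> \<not> ordpart k S Bs \<Longrightarrow> y Bs = 0"
  by (simp add: koszul_coalg_iff)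

lemma koszul_coalg_slice:
  "y \<in> koszul_coalg k S \<Longrightarrow> slice y pre post \<in> V.span (rels k (S - \<Union>(set pre) - \<Union>(set post)))"
  by (simp add: koszul_coalg_iff)

lemma koszul_coalg_subspace: "V.subspace (koszul_coalg k S :: (nat set list \<Rightarrow> 'a::field) set)"
proof (rule V.subspaceI)
  have "slice (0 :: nat set list \<Rightarrow> 'a) pre post = 0" for pre post
    by (auto simp: slice_def)
  then show "(0 :: nat set list \<Rightarrow> 'a) \<in> koszul_coalg k S"
    by (simp add: koszul_coalg_iff V.span_zero)
next
  fix x y :: "nat set list \<Rightarrow> 'a"
  assume "x \<in> koszul_coalg k S" "y \<in> koszul_coalg k S"
  moreover have "slice (x + y) pre post = slice x pre post + slice y pre post" for pre post
    by (auto simp: slice_def)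
  ultimately show "x + y \<in> koszul_coalg k S"
    by (simp add: koszul_coalg_iff V.span_add)
next
  fix c :: 'a and x :: "nat set list \<Rightarrow> 'a"
  assume "x \<in> koszul_coalg k S"
  moreover have "slice (scl c x) pre post = scl c (slice x pre post)" for pre post
    by (auto simp: slice_def)
  ultimately show "scl c x \<in> koszul_coalg k S"
    by (simp add: koszul_coalg_iff V.span_scale)
qed

lemma koszul_coalg_swap:
  assumes y: "y \<in> koszul_coalg k S"
  shows "y (pre @ [A, B] @ post) = - y (pre @ [B, A] @ post)"
proof (cases "ordpart k S (pre @ [A, B] @ post)")
  case True
  then have "ordpart k (S - \<Union>(set pre) - \<Union>(set post)) [A, B]"
    using ordpart_middle by blast
  then have "slice y pre post [A, B] = - slice y pre post [B, A]"
    by (rule span_rels_swap_split(1)[OF koszul_coalg_slice[OF y]])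
  then show ?thesis
    by (simp add: slice_def)
next
  case False
  moreover from this have "\<not> ordpart k S (pre @ [B, A] @ post)"
    using ordpart_swap by blast
  ultimately show ?thesis
    using y by (simp add: koszul_coalg_eq_0)
qed

lemma koszul_coalg_split:
  assumes y: "y \<in> koszul_coalg k S" and op: "ordpart k S (pre @ [A, B] @ post)"
  shows "y (pre @ [A, B] @ post) = (\<Sum>l\<in>B. y (pre @ [A \<union> B - {l}, {l}] @ post))"
proof -
  let ?T = "S - \<Union>(set pre) - \<Union>(set post)"
  have AB: "ordpart k ?T [A, B]"
    using op ordpart_middle by blast
  then have T: "?T = A \<union> B"
    by (simp add: ordpart_def)
  have "slice y pre post [A, B] = (\<Sum>l\<in>B. slice y pre post [?T - {l}, {l}])"
    by (rule span_rels_swap_split(2)[OF koszul_coalg_slice[OF y] AB])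
  then show ?thesis
    unfolding T by (simp add: slice_def)
qed

lemma koszul_coalg_eq_0_if_insort_eq_0:
  assumes y: "y \<in> koszul_coalg k S" and "y (pre @ singletons (insort a xs)) = 0"
  shows "y (pre @ singletons (a # xs)) = 0"
  using assms(2)
proof (induction xs arbitrary: pre)
  case (Cons b xs)
  show ?case
  proof (cases "a \<le> b")
    case False
    then have "y ((pre @ [{b}]) @ singletons (insort a xs)) = 0"
      using Cons.prems by simp
    then have "y (pre @ [{b}, {a}] @ singletons xs) = 0"
      using Cons.IH[of "pre @ [{b}]"] by simp
    then show ?thesis
      using koszul_coalg_swap[OF y, of pre "{a}" "{b}"] by simp
  qed (use Cons.prems in simp)
qed simp

lemma koszul_coalg_eq_0_if_sort_eq_0:
  assumes y: "y \<in> koszul_coalg k S" and "y (pre @ singletons (sort ls)) = 0"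
  shows "y (pre @ singletons ls) = 0"
  using assms(2)
proof (induction ls arbitrary: pre)
  case (Cons a ls)
  then have "y ((pre @ [{a}]) @ singletons (sort ls)) = 0"
    using koszul_coalg_eq_0_if_insort_eq_0[OF y] by simp
  then show ?case
    using Cons.IH[of "pre @ [{a}]"] by simp
qed simp

subsection \<open>Normal monomials span\<close>

definition normal_sets :: "nat \<Rightarrow> nat \<Rightarrow> nat set set" where
  "normal_sets k n = {L. L \<subseteq> {2..n} \<and> gen_arity k ({1..n} - L)}"

definition normal_monomial :: "nat \<Rightarrow> nat set \<Rightarrow> nat set list" where
  "normal_monomial n L = ({1..n} - L) # singletons (sorted_list_of_set L)"

locale vanishing_on_normal_monomials =
  fixes y :: "nat set list \<Rightarrow> 'a::field" and k n :: nat
  assumes koszul: "y \<in> koszul_coalg k {1..n}"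
    and normal: "\<forall>L\<in>normal_sets k n. y (normal_monomial n L) = 0"
    and n: "n \<ge> 1"
begin

lemma first_block_contains_1:
  assumes "1 \<in> B"
  shows "y (B # singletons ls) = 0"
proof (cases "ordpart k {1..n} (B # singletons ls)")
  case True
  then have ls: "distinct ls" "B = {1..n} - set ls" "set ls \<subseteq> {1..n}" "gen_arity k B"
    by (auto simp: ordpart_iff_sorted_wrt sorted_wrt_disjnt_singletons)
  moreover have "set ls \<subseteq> {2..n}"
  proof -
    have "1 \<notin> set ls"
      using ls(2) assms by blast
    moreover have "{1..n} - {1} = {2..n}"
      by auto
    ultimately show ?thesis
      using ls(3) by blast
  qed
  ultimately have "set ls \<in> normal_sets k n"
    by (simp add: normal_sets_def)
  moreover have "normal_monomial n (set ls) = [B] @ singletons (sort ls)"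
    using ls by (simp add: normal_monomial_def sorted_list_of_set_sort_remdups distinct_remdups_id)
  ultimately have "y ([B] @ singletons (sort ls)) = 0"
    using normal by metis
  then show ?thesis
    using koszul_coalg_eq_0_if_sort_eq_0[OF koszul, of "[B]"] by simp
qed (use koszul koszul_coalg_eq_0 in blast)

(* Bring the singleton {1} next to B, swap the two and split B: every monomial produced has 1
   in its first block. *)
lemma one_block:
  "y (B # singletons ls) = 0"
proof (cases "1 \<in> B \<or> \<not> ordpart k {1..n} (B # singletons ls)")
  case True
  then show ?thesis
    using first_block_contains_1 koszul koszul_coalg_eq_0 by blast
next
  case False
  then have op: "ordpart k {1..n} ([B] @ singletons ls @ [])" and "1 \<notin> B"
    by auto
  then have ls: "distinct ls" "set ls = {1..n} - B"
    using ordpart_middle[OF op, of "singletons ls"] by (simp_all add: ordpart_singletons)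
  then have "1 \<in> set ls" "\<forall>l\<in>set ls. 1 \<le> l"
    using n \<open>1 \<notin> B\<close> by auto
  then obtain ls' where sort: "sort ls = 1 # ls'"
    using ls(1) sorted_list_of_set_nonempty[of "set ls"]
    by (metis Min_eqI empty_iff finite_set sorted_list_of_set_sort_remdups distinct_remdups_id)
  have "ordpart k {1..n} ([B] @ singletons (sort ls) @ [])"
    using ordpart_middle[OF op, of "singletons (sort ls)"] op ls
    by (simp add: ordpart_singletons)
  then have op': "ordpart k {1..n} ([] @ [{1}, B] @ singletons ls')"
    using ordpart_swap[of k "{1..n}" "[]" B "{1}"] sort by simp
  have "y ([{1}, B] @ singletons ls') = (\<Sum>l\<in>B. y ([{1} \<union> B - {l}, {l}] @ singletons ls'))"
    using koszul_coalg_split[OF koszul op'] by simp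
  also have "\<dots> = 0"
  proof (rule sum.neutral, intro ballI)
    fix l
    assume "l \<in> B"
    then have "y (({1} \<union> B - {l}) # singletons (l # ls')) = 0"
      by (intro first_block_contains_1) (use \<open>1 \<notin> B\<close> in auto)
    then show "y ([{1} \<union> B - {l}, {l}] @ singletons ls') = 0"
      by simp
  qed
  finally have "y ([{1}, B] @ singletons ls') = 0" .
  then have "y ([B] @ singletons (sort ls)) = 0"
    using koszul_coalg_swap[OF koszul, of "[]" B "{1}"] sort by simp
  then show ?thesis
    using koszul_coalg_eq_0_if_sort_eq_0[OF koszul, of "[B]"] by simp
qed

lemma eq_0: "y = 0"
proof -
  have last_block: "y (Cs @ [A] @ singletons ls) = 0" for Cs A ls
  proof (induction Cs arbitrary: A ls rule: rev_induct)
    case Nil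
    then show ?case
      using one_block by simp
  next
    case (snoc C Cs)
    show ?case
    proof (cases "ordpart k {1..n} (Cs @ [C, A] @ singletons ls)")
      case True
      have "y (Cs @ [C \<union> A - {l}, {l}] @ singletons ls) = 0" for l
        using snoc.IH[of "C \<union> A - {l}" "l # ls"] by simp
      then show ?thesis
        using koszul_coalg_split[OF koszul True] by simp
    qed (use koszul koszul_coalg_eq_0 in simp)
  qed
  have "y Bs = 0" for Bs
  proof (cases Bs rule: rev_cases)
    case Nil
    then have "\<not> ordpart k {1..n} Bs"
      using n by (simp add: ordpart_def)
    then show ?thesis
      using koszul koszul_coalg_eq_0 by blast
  qed (use last_block[of _ _ "[]"] in simp)
  then show ?thesis
    by (simp add: fun_eq_iff)
qed

end

subsection \<open>Transversal sign cochains\<close>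

fun inversions :: "'a::linorder list \<Rightarrow> nat" where
  "inversions [] = 0"
| "inversions (x # xs) = length (filter (\<lambda>y. y < x) xs) + inversions xs"

lemma inversions_swap:
  "inversions (xs @ p # q # ys) + of_bool (p < q) = inversions (xs @ q # p # ys) + of_bool (q < p)"
  by (induction xs) auto

lemma sign_inversions_swap:
  assumes "p \<noteq> q"
  shows "(-1 :: 'a::ring_1) ^ inversions (xs @ q # p # ys) = - ((-1) ^ inversions (xs @ p # q # ys))"
proof (cases "p < q")
  case True
  then have "inversions (xs @ q # p # ys) = Suc (inversions (xs @ p # q # ys))"
    using inversions_swap[of xs p q ys] by simp
  then show ?thesis
    by simp
next
  case False
  then have "inversions (xs @ p # q # ys) = Suc (inversions (xs @ q # p # ys))"
    using inversions_swap[of xs p q ys] assms by simp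
  then show ?thesis
    by simp
qed

lemma inversions_sorted: "sorted xs \<Longrightarrow> inversions xs = 0"
  by (induction xs) (auto simp: filter_empty_conv not_less)

definition representatives :: "nat set \<Rightarrow> nat set list \<Rightarrow> nat list" where
  "representatives J Bs = map (\<lambda>B. the_elem (B \<inter> J)) Bs"

definition transversal_sign :: "nat \<Rightarrow> nat set \<Rightarrow> nat set \<Rightarrow> nat set list \<Rightarrow> 'a::field" where
  "transversal_sign k S J Bs =
     (if ordpart k S Bs \<and> (\<forall>B\<in>set Bs. card (B \<inter> J) = 1)
      then (-1) ^ inversions (representatives J Bs) else 0)"

lemma card_Int_eq_1_two_blocks_iff:
  assumes "A \<inter> B = {}" and "(A \<union> B) \<inter> J = {p, q}" and "p \<noteq> q"
  shows "card (A \<inter> J) = 1 \<and> card (B \<inter> J) = 1 \<longleftrightarrow> p \<in> A \<and> q \<in> B \<or> q \<in> A \<and> p \<in> B"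
proof
  assume "card (A \<inter> J) = 1 \<and> card (B \<inter> J) = 1"
  then obtain a b where ab: "A \<inter> J = {a}" "B \<inter> J = {b}"
    by (auto simp: card_1_singleton_iff)
  then have "{a, b} = {p, q}"
    using assms(2) by (simp add: Int_Un_distrib2 insert_commute)
  moreover have "a \<in> A" "b \<in> B"
    using ab by blast+
  ultimately show "p \<in> A \<and> q \<in> B \<or> q \<in> A \<and> p \<in> B"
    unfolding doubleton_eq_iff by blast
next
  have J: "A \<inter> J \<subseteq> {p, q}" "B \<inter> J \<subseteq> {p, q}" "p \<in> J" "q \<in> J"
    using assms(2) by blast+
  assume "p \<in> A \<and> q \<in> B \<or> q \<in> A \<and> p \<in> B"
  then have "A \<inter> J = {p} \<and> B \<inter> J = {q} \<or> A \<inter> J = {q} \<and> B \<inter> J = {p}"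
    using J assms(1,3) by auto
  then show "card (A \<inter> J) = 1 \<and> card (B \<inter> J) = 1"
    by auto
qed

lemma transversal_sign_middle:
  assumes "ordpart k S (pre @ [A, B] @ post)" and "\<forall>C\<in>set pre \<union> set post. card (C \<inter> J) = 1"
    and "A \<inter> J = {a}" and "B \<inter> J = {b}"
  shows "(transversal_sign k S J (pre @ [A, B] @ post) :: 'a::field)
    = (-1) ^ inversions (representatives J pre @ a # b # representatives J post)"
  using assms by (auto simp: transversal_sign_def representatives_def)

lemma transversal_sign_two_blocks:
  assumes op: "ordpart k S (pre @ [A, B] @ post)"
    and outer: "\<forall>C\<in>set pre \<union> set post. card (C \<inter> J) = 1"
    and TJ: "(S - \<Union>(set pre) - \<Union>(set post)) \<inter> J = {p, q}" and "p \<noteq> q"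
  shows "(transversal_sign k S J (pre @ [A, B] @ post) :: 'a::field)
    = (-1) ^ inversions (representatives J pre @ p # q # representatives J post)
      * rel k (S - \<Union>(set pre) - \<Union>(set post)) p q [A, B]"
proof -
  let ?T = "S - \<Union>(set pre) - \<Union>(set post)"
  let ?rp = "representatives J pre" and ?rq = "representatives J post"
  have AB_T: "ordpart k ?T [A, B]"
    using ordpart_middle[OF op] op by blast
  then have AB: "A \<inter> B = {}" "(A \<union> B) \<inter> J = {p, q}"
    using TJ by (auto simp: ordpart_iff_sorted_wrt disjnt_def)
  consider "p \<in> A" "q \<in> B" | "q \<in> A" "p \<in> B" | "\<not> (card (A \<inter> J) = 1 \<and> card (B \<inter> J) = 1)"
    using card_Int_eq_1_two_blocks_iff[OF AB \<open>p \<noteq> q\<close>] by blast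
  then show ?thesis
  proof cases
    case 1
    then have "A \<inter> J = {p}" "B \<inter> J = {q}"
      using AB by auto
    then have "(transversal_sign k S J (pre @ [A, B] @ post) :: 'a) = (-1) ^ inversions (?rp @ p # q # ?rq)"
      by (rule transversal_sign_middle[OF op outer])
    moreover have "rel k ?T p q [A, B] = (1 :: 'a)"
      using 1 AB_T AB(1) by (auto simp: rel_def)
    ultimately show ?thesis
      by simp
  next
    case 2
    then have "A \<inter> J = {q}" "B \<inter> J = {p}"
      using AB by auto
    then have "(transversal_sign k S J (pre @ [A, B] @ post) :: 'a) = (-1) ^ inversions (?rp @ q # p # ?rq)"
      by (rule transversal_sign_middle[OF op outer])
    also have "\<dots> = - ((-1) ^ inversions (?rp @ p # q # ?rq))"
      using \<open>p \<noteq> q\<close> by (rule sign_inversions_swap)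
    moreover have "rel k ?T p q [A, B] = (-1 :: 'a)"
      using 2 AB_T AB(1) by (auto simp: rel_def)
    ultimately show ?thesis
      by simp
  next
    case 3
    then have "transversal_sign k S J (pre @ [A, B] @ post) = (0 :: 'a)"
      by (auto simp: transversal_sign_def)
    moreover have "\<not> (p \<in> A \<and> q \<in> B) \<and> \<not> (q \<in> A \<and> p \<in> B)"
      using 3 card_Int_eq_1_two_blocks_iff[OF AB \<open>p \<noteq> q\<close>] by blast
    then have "rel k ?T p q [A, B] = (0 :: 'a)"
      by (auto simp: rel_def)
    ultimately show ?thesis
      by simp
  qed
qed

lemma transversal_sign_slice:
  assumes op: "ordpart k S (pre @ [A0, B0] @ post)"
    and transversal: "\<forall>C\<in>set (pre @ [A0, B0] @ post). card (C \<inter> J) = 1"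
    and p: "A0 \<inter> J = {p}" and q: "B0 \<inter> J = {q}"
  shows "slice (transversal_sign k S J :: nat set list \<Rightarrow> 'a::field) pre post
    = scl ((-1) ^ inversions (representatives J pre @ p # q # representatives J post))
        (rel k (S - \<Union>(set pre) - \<Union>(set post)) p q)"
proof (rule slice_eqI)
  let ?T = "S - \<Union>(set pre) - \<Union>(set post)"
  have outer: "\<forall>C\<in>set pre \<union> set post. card (C \<inter> J) = 1"
    using transversal by simp
  have "?T = A0 \<union> B0" "A0 \<inter> B0 = {}"
    using ordpart_middle[OF op, of "[A0, B0]"] op by (auto simp: ordpart_iff_sorted_wrt disjnt_def)
  then have TJ: "?T \<inter> J = {p, q}" and "p \<noteq> q"
    using p q by auto
  fix A B
  show "(transversal_sign k S J (pre @ [A, B] @ post) :: 'a)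
    = scl ((-1) ^ inversions (representatives J pre @ p # q # representatives J post)) (rel k ?T p q) [A, B]"
  proof (cases "ordpart k S (pre @ [A, B] @ post)")
    case True
    then show ?thesis
      using transversal_sign_two_blocks[OF True outer TJ \<open>p \<noteq> q\<close>] by simp
  next
    case False
    then have "\<not> ordpart k ?T [A, B]"
      using ordpart_middle[OF op] by blast
    with False show ?thesis
      by (simp add: transversal_sign_def rel_def)
  qed
qed (simp add: rel_def)

lemma transversal_sign_in_koszul_coalg:
  "(transversal_sign k S J :: nat set list \<Rightarrow> 'a::field) \<in> koszul_coalg k S"
proof -
  have "slice (transversal_sign k S J :: nat set list \<Rightarrow> 'a) pre post
      \<in> V.span (rels k (S - \<Union>(set pre) - \<Union>(set post)))" for pre post
  proof (cases "\<exists>A0 B0. ordpart k S (pre @ [A0, B0] @ post)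
      \<and> (\<forall>C\<in>set (pre @ [A0, B0] @ post). card (C \<inter> J) = 1)")
    case True
    let ?T = "S - \<Union>(set pre) - \<Union>(set post)"
    obtain A0 B0 p q where op: "ordpart k S (pre @ [A0, B0] @ post)"
      and transversal: "\<forall>C\<in>set (pre @ [A0, B0] @ post). card (C \<inter> J) = 1"
      and p: "A0 \<inter> J = {p}" and q: "B0 \<inter> J = {q}"
      using True by (auto simp: card_1_singleton_iff)
    have op': "ordpart k ?T [A0, B0]"
      using ordpart_middle[OF op] op by blast
    then have "p \<in> ?T" "q \<in> ?T" "p \<noteq> q"
      using p q by (auto simp: ordpart_iff_sorted_wrt disjnt_def)
    with card_ordpart_two_blocks[OF op'] have "rel k ?T p q \<in> rels k ?T"
      unfolding rels_def by blast
    then show ?thesis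
      unfolding transversal_sign_slice[OF op transversal p q] by (intro V.span_scale V.span_base)
  next
    case False
    then have "slice (transversal_sign k S J :: nat set list \<Rightarrow> 'a) pre post = 0"
      by (intro slice_eqI) (auto simp: transversal_sign_def)
    then show ?thesis
      by (simp add: V.span_zero)
  qed
  then show ?thesis
    by (simp add: koszul_coalg_iff transversal_sign_def)
qed

subsection \<open>Normal monomials are independent\<close>

lemma ordpart_normal_monomial: "L \<in> normal_sets k n \<Longrightarrow> ordpart k {1..n} (normal_monomial n L)"
  using finite_subset[of L "{2..n}"]
  by (auto simp: normal_sets_def normal_monomial_def ordpart_iff_sorted_wrt
      sorted_wrt_disjnt_singletons gen_arity_singleton)

lemma Diff_Int_insert_eq_singleton:
  "L \<subseteq> {2..n} \<Longrightarrow> n \<ge> 1 \<Longrightarrow> ({1..n} - L) \<inter> insert 1 L = {1 :: nat}"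
  by auto

lemma normal_monomial_transversal_iff:
  assumes L: "L \<subseteq> {2..n}" and L': "L' \<subseteq> {2..n}" and n: "n \<ge> 1"
  shows "(\<forall>B\<in>set (normal_monomial n L'). card (B \<inter> insert 1 L) = 1) \<longleftrightarrow> L = L'"
proof
  have fin: "finite L" "finite L'"
    using L L' finite_subset by auto
  assume transversal: "\<forall>B\<in>set (normal_monomial n L'). card (B \<inter> insert 1 L) = 1"
  show "L = L'"
  proof (rule ccontr)
    assume "L \<noteq> L'"
    then consider l where "l \<in> L'" "l \<notin> L" | l where "l \<in> L" "l \<notin> L'"
      by blast
    then show False
    proof cases
      case 1
      then have "{l} \<inter> insert 1 L = {}"
        using L' by auto
      moreover have "{l} \<in> set (normal_monomial n L')"
        using 1 fin by (simp add: normal_monomial_def)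
      ultimately show False
        using transversal by force
    next
      case 2
      then have "{1, l} \<subseteq> ({1..n} - L') \<inter> insert 1 L" and "l \<noteq> 1"
        using L L' n by auto
      then have "2 \<le> card (({1..n} - L') \<inter> insert 1 L)"
        using card_mono[of "({1..n} - L') \<inter> insert 1 L" "{1, l}"] by simp
      with transversal show False
        by (simp add: normal_monomial_def)
    qed
  qed
next
  assume "L = L'"
  with L n show "\<forall>B\<in>set (normal_monomial n L'). card (B \<inter> insert 1 L) = 1"
    using Diff_Int_insert_eq_singleton[OF L n] by (auto simp: normal_monomial_def finite_subset)
qed

lemma transversal_sign_normal_monomial:
  assumes L: "L \<in> normal_sets k n" and L': "L' \<in> normal_sets k n" and n: "n \<ge> 1"
  shows "(transversal_sign k {1..n} (insert 1 L) (normal_monomial n L') :: 'a::field)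
    = (if L = L' then 1 else 0)"
proof -
  have sub: "L \<subseteq> {2..n}" "L' \<subseteq> {2..n}"
    using L L' by (simp_all add: normal_sets_def)
  show ?thesis
  proof (cases "L = L'")
    case True
    have "finite L"
      using sub finite_subset by auto
    then have "map (\<lambda>l. the_elem ({l} \<inter> insert 1 L)) (sorted_list_of_set L) = sorted_list_of_set L"
      by (intro map_idI) auto
    then have "representatives (insert 1 L) (normal_monomial n L) = 1 # sorted_list_of_set L"
      using Diff_Int_insert_eq_singleton[OF sub(1) n]
      by (simp add: representatives_def normal_monomial_def comp_def)
    moreover have "sorted (1 # sorted_list_of_set L)"
      using sub \<open>finite L\<close> by auto
    ultimately have "inversions (representatives (insert 1 L) (normal_monomial n L)) = 0"
      by (simp only: inversions_sorted)
    with True show ?thesis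
      using ordpart_normal_monomial[OF L'] normal_monomial_transversal_iff[OF sub n]
      by (simp add: transversal_sign_def)
  next
    case False
    then show ?thesis
      using normal_monomial_transversal_iff[OF sub n] by (simp add: transversal_sign_def)
  qed
qed

subsection \<open>Dimension count\<close>

context
  fixes I :: "'i set" and b :: "'i \<Rightarrow> nat set list \<Rightarrow> 'a::field" and e :: "'i \<Rightarrow> nat set list"
  assumes finite_I: "finite I"
    and dual: "\<And>i j. i \<in> I \<Longrightarrow> j \<in> I \<Longrightarrow> b i (e j) = (if i = j then 1 else 0)"
begin

lemma dual_family_eval:
  assumes "j \<in> I"
  shows "(\<Sum>i\<in>I. scl (u i) (b i)) (e j) = u j"
proof -
  have "(\<Sum>i\<in>I. scl (u i) (b i)) (e j) = (\<Sum>i\<in>I. if i = j then u i else 0)"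
    unfolding sum_fun_apply using assms dual by (intro sum.cong) auto
  also have "\<dots> = u j"
    using finite_I assms by simp
  finally show ?thesis .
qed

lemma dual_family_inj: "inj_on b I"
proof (rule inj_onI)
  fix i i'
  assume i: "i \<in> I" "i' \<in> I" and "b i = b i'"
  then have "b i' (e i) = 1"
    using dual[of i i] by simp
  then show "i = i'"
    using dual[OF i(2,1)] by (simp split: if_splits)
qed

lemma dual_family_independent: "V.independent (b ` I)"
proof
  assume "V.dependent (b ` I)"
  then obtain u where u: "\<exists>v\<in>b ` I. u v \<noteq> 0" "(\<Sum>v\<in>b ` I. scl (u v) v) = 0"
    using V.dependent_finite finite_I by blast
  from u(1) obtain j where j: "j \<in> I" "u (b j) \<noteq> 0"
    by blast
  have "(\<Sum>i\<in>I. scl (u (b i)) (b i)) = 0"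
    using u(2) sum.reindex[OF dual_family_inj, of "\<lambda>v. scl (u v) v"] by simp
  then have "(\<Sum>i\<in>I. scl (u (b i)) (b i)) (e j) = 0"
    by simp
  with j show False
    using dual_family_eval[of j "\<lambda>i. u (b i)"] by simp
qed

lemma dim_eq_card_if_dual_family:
  assumes W: "V.subspace W" and b: "\<And>i. i \<in> I \<Longrightarrow> b i \<in> W"
    and determined: "\<And>w. w \<in> W \<Longrightarrow> (\<And>j. j \<in> I \<Longrightarrow> w (e j) = 0) \<Longrightarrow> w = 0"
  shows "V.dim W = card I"
proof -
  have spanning: "W \<subseteq> V.span (b ` I)"
  proof
    fix w
    assume w: "w \<in> W"
    define s where "s = (\<Sum>i\<in>I. scl (w (e i)) (b i))"
    have "s \<in> W"
      unfolding s_def using W b by (intro V.subspace_sum V.subspace_scale) auto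
    then have "w - s \<in> W"
      using V.subspace_diff[OF W w] by blast
    moreover have "(w - s) (e j) = 0" if "j \<in> I" for j
      using dual_family_eval[OF that, of "\<lambda>i. w (e i)"] by (simp add: s_def)
    ultimately have "w = s"
      using determined[of "w - s"] by simp
    moreover have "s \<in> V.span (b ` I)"
      unfolding s_def by (intro V.span_sum V.span_scale V.span_base) auto
    ultimately show "w \<in> V.span (b ` I)"
      by simp
  qed
  have "b ` I \<subseteq> W"
    using b by blast
  from V.dim_unique[OF this spanning dual_family_independent card_image[OF dual_family_inj]]
  show ?thesis .
qed

end

lemma dim_koszul_coalg:
  assumes "n \<ge> 1"
  shows "V.dim (koszul_coalg k {1..n} :: (nat set list \<Rightarrow> 'a::field) set) = card (normal_sets k n)"
proof (rule dim_eq_card_if_dual_family[where b = "\<lambda>L. transversal_sign k {1..n} (insert 1 L)"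
      and e = "normal_monomial n"])
  show "finite (normal_sets k n)"
    by (rule finite_subset[of _ "Pow {2..n}"]) (auto simp: normal_sets_def)
  show "\<And>w. w \<in> koszul_coalg k {1..n} \<Longrightarrow> (\<And>L. L \<in> normal_sets k n \<Longrightarrow> w (normal_monomial n L) = 0)
      \<Longrightarrow> (w :: nat set list \<Rightarrow> 'a) = 0"
    using vanishing_on_normal_monomials.eq_0 assms unfolding vanishing_on_normal_monomials_def by blast
qed (rule koszul_coalg_subspace transversal_sign_in_koszul_coalg
      transversal_sign_normal_monomial[OF _ _ assms] | assumption)+

lemma card_subsets_card_add:
  assumes "finite X"
  shows "card {L. L \<subseteq> X \<and> card L + m = card X} = card X choose m"
proof (cases "m \<le> card X")
  case True
  then have "{L. L \<subseteq> X \<and> card L + m = card X} = {L. L \<subseteq> X \<and> card L = card X - m}"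
    by auto
  then show ?thesis
    using assms True by (simp add: n_subsets binomial_symmetric[symmetric])
next
  case False
  then have "{L. L \<subseteq> X \<and> card L + m = card X} = {}"
    by auto
  with False show ?thesis
    by simp
qed

lemma gen_arity_complement_iff:
  assumes "k > 1" and "n \<ge> 1" and L: "L \<subseteq> {2..n}"
  shows "gen_arity k ({1..n} - L) \<longleftrightarrow> (\<exists>p\<in>{0..n}. card L + p * (k - 1) = card {2..n})"
proof -
  have card_L: "card L \<le> n - 1"
    using card_mono[OF _ L] by simp
  have card_Diff: "card ({1..n} - L) = n - card L"
    using L finite_subset by (subst card_Diff_subset) auto
  have le: "p \<le> p * (k - 1)" for p
  proof -
    have "p * 1 \<le> p * (k - 1)"
      using assms(1) by (intro mult_le_mono2) simp
    then show ?thesis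
      by simp
  qed
  show ?thesis
  proof
    assume "gen_arity k ({1..n} - L)"
    then obtain d where "card ({1..n} - L) = 1 + d * (k - 1)"
      unfolding gen_arity_def ..
    then have sum: "card L + d * (k - 1) = card {2..n}"
      using card_L card_Diff by simp
    moreover have "d \<le> n"
      using le[of d] sum card_atLeastAtMost[of 2 n] by linarith
    ultimately show "\<exists>p\<in>{0..n}. card L + p * (k - 1) = card {2..n}"
      by auto
  next
    assume "\<exists>p\<in>{0..n}. card L + p * (k - 1) = card {2..n}"
    then obtain p where "card L + p * (k - 1) = card {2..n}"
      by blast
    then have "card ({1..n} - L) = 1 + p * (k - 1)"
      using card_Diff assms(2) by simp
    then show "gen_arity k ({1..n} - L)"
      unfolding gen_arity_def ..
  qed
qed

lemma normal_sets_eq_Union: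
  assumes "k > 1" and "n \<ge> 1"
  shows "normal_sets k n = (\<Union>p\<in>{0..n}. {L. L \<subseteq> {2..n} \<and> card L + p * (k - 1) = card {2..n}})"
  using gen_arity_complement_iff[OF assms] unfolding normal_sets_def by blast

lemma card_normal_sets:
  assumes "k > 1" and "n \<ge> 1"
  shows "card (normal_sets k n) = (\<Sum>p = 0..n. (n - 1) choose (p * (k - 1)))"
proof -
  let ?A = "\<lambda>m. {L. L \<subseteq> {2..n} \<and> card L + m = card {2..n}}"
  have "?A m \<inter> ?A m' = {}" if "m \<noteq> m'" for m m'
    using that by auto
  moreover have "p * (k - 1) \<noteq> q * (k - 1)" if "p \<noteq> q" for p q
    using that assms(1) by simp
  moreover have "finite (?A m)" for m
    by (rule finite_subset[of _ "Pow {2..n}"]) auto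
  ultimately have "card (\<Union>p\<in>{0..n}. ?A (p * (k - 1))) = (\<Sum>p = 0..n. card (?A (p * (k - 1))))"
    by (intro card_UN_disjoint) auto
  also have "\<dots> = (\<Sum>p = 0..n. (n - 1) choose (p * (k - 1)))"
    using card_subsets_card_add[of "{2..n}"] by simp
  finally show ?thesis
    unfolding normal_sets_eq_Union[OF assms] .
qed

theorem mainTheorem12:
  fixes k n :: nat
  assumes "k > 1" and "n \<ge> 1"
  shows "dual_dim TYPE('a::field_char_0) k {1..n} = (\<Sum>p = 0..n. (n - 1) choose (p * (k - 1)))"
  unfolding dual_dim_def dim_koszul_coalg[OF assms(2), where 'a='a] card_normal_sets[OF assms] ..

end
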